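(* Let $H$ be a real Hilbert space, $(T_n)_{n\in\mathbb{N}}$ a family of self-mappings of $H$ and $(\gamma_n)$ a sequence of positive reals. Then $(T_n)$ is jointly $(P_2)$ with respect to $(\gamma_n)$ if and only if $(T_n)$ is jointly firmly nonexpansive with respect to $(\gamma_n)$.
   Context: $(T_n)$ is jointly firmly nonexpansive w.r.t. $(\gamma_n)$ if for all $n,m\in\mathbb{N}$, $x,y\in H$, $\alpha,\beta\in[0,1]$ with $(1-\alpha)\gamma_n=(1-\beta)\gamma_m$: $\|T_nx-T_my\|\le\|((1-\alpha)x+\alpha T_nx)-((1-\beta)y+\beta T_my)\|$. $(T_n)$ is jointly $(P_2)$ w.r.t. $(\gamma_n)$ if for all $n,m$ and $x,y\in H$: $\frac1{\gamma_m}\big(\|T_nx-T_my\|^2+\|y-T_my\|^2-\|y-T_nx\|^2\big)\le\frac1{\gamma_n}\big(\|x-T_my\|^2-\|x-T_nx\|^2-\|T_nx-T_my\|^2\big)$. *)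

theory Defs
  imports "HOL-Analysis.Analysis"
begin

definition jointly_firmly_nonexpansive ::
  "(nat \<Rightarrow> 'a::{real_inner,complete_space} \<Rightarrow> 'a) \<Rightarrow> (nat \<Rightarrow> real) \<Rightarrow> bool" where
  "jointly_firmly_nonexpansive T \<gamma> \<longleftrightarrow>
    (\<forall>n m x y \<alpha> \<beta>. \<alpha> \<in> {0..1} \<longrightarrow> \<beta> \<in> {0..1} \<longrightarrow>
       (1 - \<alpha>) * \<gamma> n = (1 - \<beta>) * \<gamma> m \<longrightarrow>
       norm (T n x - T m y) \<le>
       norm (((1 - \<alpha>) *\<^sub>R x + \<alpha> *\<^sub>R T n x) - ((1 - \<beta>) *\<^sub>R y + \<beta> *\<^sub>R T m y)))"

definition jointly_P2 ::
  "(nat \<Rightarrow> 'a::{real_inner,complete_space} \<Rightarrow> 'a) \<Rightarrow> (nat \<Rightarrow> real) \<Rightarrow> bool" where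
  "jointly_P2 T \<gamma> \<longleftrightarrow>
    (\<forall>n m x y.
       (1 / \<gamma> m) * ((norm (T n x - T m y))\<^sup>2 + (norm (y - T m y))\<^sup>2 - (norm (y - T n x))\<^sup>2)
       \<le> (1 / \<gamma> n) * ((norm (x - T m y))\<^sup>2 - (norm (x - T n x))\<^sup>2 - (norm (T n x - T m y))\<^sup>2))"

end

theory Submission
  imports Defs
begin

text \<open>Fix \<open>n, m, x, y\<close> and write \<open>a = T n x\<close>, \<open>b = T m y\<close> and
  \<open>w = (x - a) /\<^sub>R \<gamma> n - (y - b) /\<^sub>R \<gamma> m\<close>.  Expanding the squared norms, the \<open>(P\<^sub>2)\<close>
  inequality says exactly \<open>0 \<le> (a - b) \<bullet> w\<close>.  On the other hand, putting
  \<open>t = (1 - \<alpha>) \<gamma> n = (1 - \<beta>) \<gamma> m\<close>, the difference of the two convex combinations in the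
  firm nonexpansiveness inequality is \<open>(a - b) + t w\<close>, and \<open>t\<close> ranges over
  \<open>[0, min (\<gamma> n) (\<gamma> m)]\<close>.  Finally, \<open>\<parallel>d\<parallel> \<le> \<parallel>d + t w\<parallel>\<close> for all small \<open>t \<ge> 0\<close> holds iff
  \<open>0 \<le> d \<bullet> w\<close>, since \<open>\<parallel>d + t w\<parallel>\<^sup>2 = \<parallel>d\<parallel>\<^sup>2 + t (2 d \<bullet> w + t \<parallel>w\<parallel>\<^sup>2)\<close>.\<close>

lemma norm_add_scaleR_power2:
  fixes d w :: "'a::real_inner"
  shows "(norm (d + t *\<^sub>R w))\<^sup>2 = (norm d)\<^sup>2 + t * (2 * inner d w + t * inner w w)"
  by (simp add: power2_norm_eq_inner inner_add_left inner_add_right inner_commute algebra_simps)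

lemma norm_le_norm_add_scaleR_iff:
  fixes d w :: "'a::real_inner"
  assumes "c > 0"
  shows "(\<forall>t\<in>{0..c}. norm d \<le> norm (d + t *\<^sub>R w)) \<longleftrightarrow> 0 \<le> inner d w"
proof
  assume le: "\<forall>t\<in>{0..c}. norm d \<le> norm (d + t *\<^sub>R w)"
  show "0 \<le> inner d w"
  proof (rule ccontr)
    assume neg: "\<not> 0 \<le> inner d w"
    then have "w \<noteq> 0"
      by auto
    then have ww: "inner w w > 0"
      by simp
    define t where "t = min c (- inner d w / inner w w)"
    have "inner d w / inner w w < 0"
      using neg ww by (simp add: divide_neg_pos)
    then have t_pos: "t > 0"
      using assms by (simp add: t_def)
    have "t \<le> (- inner d w) / inner w w"
      by (simp add: t_def)
    then have "t * inner w w \<le> - inner d w"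
      using ww by (metis pos_le_divide_eq)
    then have "t * (2 * inner d w + t * inner w w) < 0"
      using t_pos neg by (intro mult_pos_neg) auto
    then have "(norm (d + t *\<^sub>R w))\<^sup>2 < (norm d)\<^sup>2"
      unfolding norm_add_scaleR_power2 by simp
    moreover have "norm d \<le> norm (d + t *\<^sub>R w)"
      using le t_pos by (auto simp: t_def)
    ultimately show False
      by (meson norm_ge_zero not_le power_mono)
  qed
next
  assume nonneg: "0 \<le> inner d w"
  show "\<forall>t\<in>{0..c}. norm d \<le> norm (d + t *\<^sub>R w)"
  proof
    fix t :: real
    assume "t \<in> {0..c}"
    then have "0 \<le> t * (2 * inner d w + t * inner w w)"
      using nonneg by (intro mult_nonneg_nonneg add_nonneg_nonneg) auto
    then have "(norm d)\<^sup>2 \<le> (norm (d + t *\<^sub>R w))\<^sup>2"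
      unfolding norm_add_scaleR_power2 by simp
    then show "norm d \<le> norm (d + t *\<^sub>R w)"
      using power2_le_imp_le norm_ge_zero by blast
  qed
qed

lemma P2_inequality_iff_inner_nonneg:
  fixes a b u v :: "'a::real_inner"
  assumes "gn > 0" and "gm > 0"
  shows "(1 / gm) * ((norm (a - b))\<^sup>2 + (norm (v - b))\<^sup>2 - (norm (v - a))\<^sup>2)
           \<le> (1 / gn) * ((norm (u - b))\<^sup>2 - (norm (u - a))\<^sup>2 - (norm (a - b))\<^sup>2)
         \<longleftrightarrow> 0 \<le> inner (a - b) ((1 / gn) *\<^sub>R (u - a) - (1 / gm) *\<^sub>R (v - b))"
proof -
  have lhs: "(norm (a - b))\<^sup>2 + (norm (v - b))\<^sup>2 - (norm (v - a))\<^sup>2 = 2 * inner (v - b) (a - b)"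
    and rhs: "(norm (u - b))\<^sup>2 - (norm (u - a))\<^sup>2 - (norm (a - b))\<^sup>2 = 2 * inner (u - a) (a - b)"
    by (simp_all add: power2_norm_eq_inner inner_diff_left inner_diff_right inner_commute
        algebra_simps)
  have inner_w: "inner (a - b) ((1 / gn) *\<^sub>R (u - a) - (1 / gm) *\<^sub>R (v - b))
                   = inner (u - a) (a - b) / gn - inner (v - b) (a - b) / gm"
    by (simp add: inner_diff_right inner_commute)
  show ?thesis
    unfolding lhs rhs inner_w using assms by (simp add: field_simps)
qed

lemma convex_combinations_diff_eq:
  fixes a b u v :: "'a::real_vector"
  assumes "gn > 0" and "gm > 0"
    and "t = (1 - \<alpha>) * gn" and "t = (1 - \<beta>) * gm"
  shows "((1 - \<alpha>) *\<^sub>R u + \<alpha> *\<^sub>R a) - ((1 - \<beta>) *\<^sub>R v + \<beta> *\<^sub>R b)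
           = (a - b) + t *\<^sub>R ((1 / gn) *\<^sub>R (u - a) - (1 / gm) *\<^sub>R (v - b))"
proof -
  have \<alpha>: "\<alpha> = 1 - t / gn" and \<beta>: "\<beta> = 1 - t / gm"
    using assms by (auto simp: field_simps)
  show ?thesis
    unfolding \<alpha> \<beta> by (simp add: scaleR_diff_right scaleR_diff_left algebra_simps)
qed

lemma firm_inequality_iff_segment:
  fixes a b u v :: "'a::real_normed_vector"
  assumes gn: "gn > 0" and gm: "gm > 0"
  shows "(\<forall>\<alpha> \<beta>. \<alpha> \<in> {0..1} \<longrightarrow> \<beta> \<in> {0..1} \<longrightarrow> (1 - \<alpha>) * gn = (1 - \<beta>) * gm \<longrightarrow>
            norm (a - b) \<le> norm (((1 - \<alpha>) *\<^sub>R u + \<alpha> *\<^sub>R a) - ((1 - \<beta>) *\<^sub>R v + \<beta> *\<^sub>R b)))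
         \<longleftrightarrow> (\<forall>t\<in>{0..min gn gm}.
            norm (a - b) \<le> norm ((a - b) + t *\<^sub>R ((1 / gn) *\<^sub>R (u - a) - (1 / gm) *\<^sub>R (v - b))))"
    (is "?firm \<longleftrightarrow> (\<forall>t\<in>{0..min gn gm}. ?segment t)")
proof
  assume firm: ?firm
  show "\<forall>t\<in>{0..min gn gm}. ?segment t"
  proof
    fix t
    assume t: "t \<in> {0..min gn gm}"
    define \<alpha> \<beta> where "\<alpha> = 1 - t / gn" and "\<beta> = 1 - t / gm"
    have \<alpha>: "\<alpha> \<in> {0..1}" and \<beta>: "\<beta> \<in> {0..1}"
      using t gn gm by (auto simp: \<alpha>_def \<beta>_def)
    have t_gn: "t = (1 - \<alpha>) * gn" and t_gm: "t = (1 - \<beta>) * gm"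
      using gn gm by (simp_all add: \<alpha>_def \<beta>_def)
    show "?segment t"
      using firm[rule_format, OF \<alpha> \<beta>] t_gn t_gm
      unfolding convex_combinations_diff_eq[OF gn gm t_gn t_gm] by simp
  qed
next
  assume segment: "\<forall>t\<in>{0..min gn gm}. ?segment t"
  show ?firm
  proof (intro allI impI)
    fix \<alpha> \<beta> :: real
    assume \<alpha>: "\<alpha> \<in> {0..1}" and \<beta>: "\<beta> \<in> {0..1}" and eq: "(1 - \<alpha>) * gn = (1 - \<beta>) * gm"
    define t where "t = (1 - \<alpha>) * gn"
    have "0 \<le> t" and "t \<le> gn"
      using \<alpha> gn by (auto simp: t_def mult_le_cancel_right1)
    moreover have "t \<le> gm"
      using \<beta> gm eq by (auto simp: t_def mult_le_cancel_right1)
    ultimately have "t \<in> {0..min gn gm}"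
      by simp
    moreover have t_gm: "t = (1 - \<beta>) * gm"
      using eq by (simp add: t_def)
    ultimately show "norm (a - b) \<le> norm (((1 - \<alpha>) *\<^sub>R u + \<alpha> *\<^sub>R a) - ((1 - \<beta>) *\<^sub>R v + \<beta> *\<^sub>R b))"
      using segment unfolding convex_combinations_diff_eq[OF gn gm t_def t_gm] by blast
  qed
qed

theorem proposition3p14:
  fixes T :: "nat \<Rightarrow> 'a::{real_inner,complete_space} \<Rightarrow> 'a"
    and \<gamma> :: "nat \<Rightarrow> real"
  assumes "\<And>n. \<gamma> n > 0"
  shows "jointly_P2 T \<gamma> \<longleftrightarrow> jointly_firmly_nonexpansive T \<gamma>"
proof -
  have "(1 / \<gamma> m) * ((norm (T n x - T m y))\<^sup>2 + (norm (y - T m y))\<^sup>2 - (norm (y - T n x))\<^sup>2)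
          \<le> (1 / \<gamma> n) * ((norm (x - T m y))\<^sup>2 - (norm (x - T n x))\<^sup>2 - (norm (T n x - T m y))\<^sup>2)
        \<longleftrightarrow> (\<forall>\<alpha> \<beta>. \<alpha> \<in> {0..1} \<longrightarrow> \<beta> \<in> {0..1} \<longrightarrow> (1 - \<alpha>) * \<gamma> n = (1 - \<beta>) * \<gamma> m \<longrightarrow>
          norm (T n x - T m y)
            \<le> norm (((1 - \<alpha>) *\<^sub>R x + \<alpha> *\<^sub>R T n x) - ((1 - \<beta>) *\<^sub>R y + \<beta> *\<^sub>R T m y)))"
    for n m x y
  proof -
    have min_pos: "min (\<gamma> n) (\<gamma> m) > 0"
      using assms by simp
    show ?thesis
      unfolding P2_inequality_iff_inner_nonneg[OF assms assms]
        firm_inequality_iff_segment[OF assms assms] norm_le_norm_add_scaleR_iff[OF min_pos] ..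
  qed
  then show ?thesis
    unfolding jointly_P2_def jointly_firmly_nonexpansive_def by blast
qed

end
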